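(* Every fractal matrix (with parameters $q\ge2$, $m\ge1$) is non-expandable: no bang of it has more columns than it has.
   Context: A subcube of ${\bf Z}_q^n$ is obtained by fixing some coordinates and letting the others run through ${\bf Z}_q$; its star pattern is the vector over ${\bf Z}_q\cup\{*\}$ with fixed values in fixed coordinates and $*$ in free ones. The star matrix of a partition of ${\bf Z}_q^n$ into subcubes is the matrix whose rows are the star patterns of the subcubes; it is A-primitive if no column consists only of $*$. Fractal matrices: $M_{q,0}$ has one row and zero columns; for $m\ge1$, $M_{q,m}$ consists of $q$ horizontal blocks indexed by $a=0,\dots,q-1$, each with $q^{m-1}$ rows; its first column has entry $a$ in every row of block $a$; its remaining columns are divided into $q$ vertical stripes of width equal to the number of columns of $M_{q,m-1}$, and in block $a$ the $a$-th stripe is a copy of $M_{q,m-1}$ while other stripes of block $a$ are all $*$. A fractal matrix is any matrix obtained from some $M_{q,m}$ by permuting rows and columns; it is an A-primitive star matrix of a partition into $q^m$ subcubes of equal dimension. Bang: given an A-primitive star matrix $M$ of a partition into subcubes of equal dimension, a column $i$ and $a\in{\bf Z}_q$, the bang of $M$ at $(i,a)$ is obtained by: (1) deleting column $i$; (2) deleting all rows having in column $i$ a value of ${\bf Z}_q$ different from $a$; (3) replacing each row having $a$ in column $i$ by $q$ identical copies; (4) for each such group of $q$ copies, adjoining a new column having the values $0,1,\dots,q-1$ (each once) in the rows of that group and $*$ in all other rows; (5) deleting all columns consisting only of $*$. $M$ is non-expandable if no bang of $M$ has more columns than $M$. *)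

theory Defs
  imports "HOL-Library.Multiset" "HOL-Combinatorics.Permutations"
begin

text \<open>A star matrix is a list of rows; each row is a list of entries of type
  nat option, where None stands for the star and Some x for the value x in Z_q
  (represented by 0..q-1).\<close>

type_synonym smatrix = "nat option list list"

definition ncols :: "smatrix \<Rightarrow> nat" where
  "ncols M = (case M of [] \<Rightarrow> 0 | r # _ \<Rightarrow> length r)"

fun fractal :: "nat \<Rightarrow> nat \<Rightarrow> smatrix" where
  "fractal q 0 = [[]]"
| "fractal q (Suc m) =
     (let P = fractal q m; w = ncols P in
      concat (map (\<lambda>a. map (\<lambda>r. Some a #
          concat (map (\<lambda>b. if b = a then r else replicate w None) [0..<q])) P) [0..<q]))"

definition is_fractal :: "nat \<Rightarrow> nat \<Rightarrow> smatrix \<Rightarrow> bool" where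
  "is_fractal q m F \<longleftrightarrow>
     (let n = ncols (fractal q m) in
      \<exists>\<sigma>. \<sigma> permutes {..<n} \<and>
          mset F = mset (map (\<lambda>r. map (\<lambda>j. r ! \<sigma> j) [0..<n]) (fractal q m)))"

definition del_col :: "nat \<Rightarrow> 'a list \<Rightarrow> 'a list" where
  "del_col i r = take i r @ drop (Suc i) r"

definition bang_raw :: "nat \<Rightarrow> smatrix \<Rightarrow> nat \<Rightarrow> nat \<Rightarrow> smatrix" where
  "bang_raw q M i a =
     (let S = [del_col i r. r \<leftarrow> M, r ! i = None];
          G = [del_col i r. r \<leftarrow> M, r ! i = Some a];
          k = length G
      in map (\<lambda>r. r @ replicate k None) S @
         concat (map (\<lambda>j. map (\<lambda>b. (G ! j) @ (replicate k None)[j := Some b]) [0..<q]) [0..<k]))"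

definition bang_raw_width :: "smatrix \<Rightarrow> nat \<Rightarrow> nat \<Rightarrow> nat" where
  "bang_raw_width M i a = ncols M - 1 + length [r \<leftarrow> M. r ! i = Some a]"

definition bang :: "nat \<Rightarrow> smatrix \<Rightarrow> nat \<Rightarrow> nat \<Rightarrow> smatrix" where
  "bang q M i a =
     (let R = bang_raw q M i a;
          keep = filter (\<lambda>c. \<exists>r\<in>set R. r ! c \<noteq> None) [0..<bang_raw_width M i a]
      in map (\<lambda>r. map (\<lambda>c. r ! c) keep) R)"

definition non_expandable :: "nat \<Rightarrow> smatrix \<Rightarrow> bool" where
  "non_expandable q M \<longleftrightarrow> (\<forall>i < ncols M. \<forall>a < q. ncols (bang q M i a) \<le> ncols M)"

end

theory Submission
  imports Defs
begin

(* A bang at (i, a) removes column i and adds one new column for each of the k rows having a in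
   column i. Every other column whose non-star entries all lie in rows deleted by the bang (rows
   with a value other than a in column i) becomes a star column and is removed too; call these
   d columns dead. So the bang has at most n - 1 - d + k columns, and it suffices that k <= d + 1.
   Both k and d are invariant under permuting rows and columns, and for M_{q,m} the inequality
   follows by induction on m, with w the width of M_{q,m-1}: for the first column, the block of a
   has (q - 1) w + 1 rows while the q - 1 stripes outside that block are dead; a column in place t
   of a stripe has the same count k as column t of M_{q,m-1}, and the dead columns of M_{q,m-1}
   stay dead inside the stripe. *)

definition rectangular :: "smatrix \<Rightarrow> bool" where
  "rectangular M \<longleftrightarrow> (\<forall>r\<in>set M. length r = ncols M)"

definition value_count :: "smatrix \<Rightarrow> nat \<Rightarrow> nat \<Rightarrow> nat" where
  "value_count M i a = length [r \<leftarrow> M. r ! i = Some a]"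

definition star_col :: "smatrix \<Rightarrow> nat \<Rightarrow> bool" where
  "star_col M j \<longleftrightarrow> (\<forall>r\<in>set M. r ! j = None)"

definition surviving_rows :: "smatrix \<Rightarrow> nat \<Rightarrow> nat \<Rightarrow> smatrix" where
  "surviving_rows M i a = [r \<leftarrow> M. r ! i = None \<or> r ! i = Some a]"

definition dead_cols :: "smatrix \<Rightarrow> nat \<Rightarrow> nat \<Rightarrow> nat set" where
  "dead_cols M i a = {j. j < ncols M \<and> j \<noteq> i \<and> star_col (surviving_rows M i a) j}"

lemma ncols_eq_length: "r \<in> set M \<Longrightarrow> rectangular M \<Longrightarrow> ncols M = length r"
  unfolding rectangular_def by simp

section \<open>Bangs\<close>

definition skip_col :: "nat \<Rightarrow> nat \<Rightarrow> nat" where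
  "skip_col i c = (if c < i then c else Suc c)"

lemma skip_col_neq [simp]: "skip_col i c \<noteq> i"
  by (simp add: skip_col_def)

lemma skip_col_less: "c < n - 1 \<Longrightarrow> i < n \<Longrightarrow> skip_col i c < n"
  by (auto simp: skip_col_def)

lemma inj_skip_col: "inj (skip_col i)"
  by (auto simp: inj_def skip_col_def split: if_splits)

lemma length_del_col: "i < length r \<Longrightarrow> length (del_col i r) = length r - 1"
  by (simp add: del_col_def)

lemma nth_del_col:
  "i < length r \<Longrightarrow> c < length r - 1 \<Longrightarrow> del_col i r ! c = r ! skip_col i c"
  by (auto simp: del_col_def skip_col_def nth_append min_def)

lemma nth_bang_raw_row:
  assumes "rectangular M" "i < ncols M"
    and "r \<in> set (bang_raw q M i a)" "c < ncols M - 1"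
  obtains r0 where "r0 \<in> set (surviving_rows M i a)" "r ! c = r0 ! skip_col i c"
proof -
  define G where "G = [del_col i r. r \<leftarrow> M, r ! i = Some a]"
  have del_col: "length (del_col i r0) = ncols M - 1" "del_col i r0 ! c = r0 ! skip_col i c"
    if "r0 \<in> set M" for r0
    using that assms by (simp_all add: length_del_col nth_del_col ncols_eq_length)
  have "(\<exists>r0\<in>set M. r0 ! i = None \<and> r = del_col i r0 @ replicate (length G) None) \<or>
        (\<exists>j<length G. \<exists>b. r = G ! j @ (replicate (length G) None)[j := Some b])"
    using assms(3) by (auto simp: bang_raw_def Let_def G_def[symmetric])
  then show ?thesis
  proof (elim disjE exE bexE conjE)
    fix r0 assume "r0 \<in> set M" "r0 ! i = None" "r = del_col i r0 @ replicate (length G) None"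
    then show ?thesis
      using del_col assms(4) by (intro that[of r0]) (simp_all add: nth_append surviving_rows_def)
  next
    fix j b assume j: "j < length G" and r: "r = G ! j @ (replicate (length G) None)[j := Some b]"
    then obtain r0 where "r0 \<in> set M" "r0 ! i = Some a" "G ! j = del_col i r0"
      using nth_mem[OF j] by (auto simp: G_def)
    then show ?thesis
      using del_col assms(4) r by (intro that[of r0]) (simp_all add: nth_append surviving_rows_def)
  qed
qed

lemma ncols_bang_le:
  "ncols (bang q M i a) \<le>
     card {c. c < bang_raw_width M i a \<and> \<not> star_col (bang_raw q M i a) c}"
proof -
  define R where "R = bang_raw q M i a"
  define keep where "keep = filter (\<lambda>c. \<exists>r\<in>set R. r ! c \<noteq> None) [0..<bang_raw_width M i a]"
  have "ncols (bang q M i a) \<le> length keep"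
    by (cases R) (simp_all add: bang_def R_def keep_def ncols_def Let_def)
  also have "\<dots> = card (set keep)"
    by (rule distinct_card[symmetric]) (simp add: keep_def)
  also have "set keep = {c. c < bang_raw_width M i a \<and> \<not> star_col R c}"
    by (auto simp: keep_def star_col_def)
  finally show ?thesis
    by (simp add: R_def)
qed

lemma nonstar_cols_bang_raw:
  assumes "rectangular M" "i < ncols M"
  shows "{c. c < bang_raw_width M i a \<and> \<not> star_col (bang_raw q M i a) c} \<subseteq>
    {c. c < ncols M - 1 \<and> \<not> star_col (surviving_rows M i a) (skip_col i c)} \<union>
    {ncols M - 1..<bang_raw_width M i a}"
proof clarify
  fix c assume c: "c < bang_raw_width M i a" "\<not> star_col (bang_raw q M i a) c"
    and "c \<notin> {ncols M - 1..<bang_raw_width M i a}"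
  then have "c < ncols M - 1" by simp
  moreover obtain r where "r \<in> set (bang_raw q M i a)" "r ! c \<noteq> None"
    using c(2) by (auto simp: star_col_def)
  ultimately show "c < ncols M - 1 \<and> \<not> star_col (surviving_rows M i a) (skip_col i c)"
    using nth_bang_raw_row[OF assms] by (metis star_col_def)
qed

lemma ncols_bang_plus_dead_cols:
  assumes "rectangular M" and i: "i < ncols M"
  shows "ncols (bang q M i a) + card (dead_cols M i a) \<le> ncols M - 1 + value_count M i a"
proof -
  define n where "n = ncols M"
  define live where "live = {c. c < n - 1 \<and> \<not> star_col (surviving_rows M i a) (skip_col i c)}"
  have dead: "dead_cols M i a \<subseteq> {..<n} - {i}"
    by (auto simp: dead_cols_def n_def)
  have "ncols (bang q M i a) \<le>
      card {c. c < bang_raw_width M i a \<and> \<not> star_col (bang_raw q M i a) c}"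
    by (rule ncols_bang_le)
  also have "\<dots> \<le> card (live \<union> {n - 1..<bang_raw_width M i a})"
    using nonstar_cols_bang_raw[OF assms, of a q] by (intro card_mono) (simp_all add: live_def n_def)
  also have "\<dots> \<le> card live + value_count M i a"
    using card_Un_le[of live "{n - 1..<bang_raw_width M i a}"]
    by (simp add: bang_raw_width_def value_count_def n_def)
  also have "card live = card (skip_col i ` live)"
    by (simp add: card_image inj_on_subset[OF inj_skip_col])
  also have "\<dots> \<le> card ({..<n} - {i} - dead_cols M i a)"
    using i by (intro card_mono) (auto simp: live_def dead_cols_def skip_col_less n_def)
  also have "\<dots> = n - 1 - card (dead_cols M i a)"
    using i card_Diff_subset[OF finite_subset[OF dead] dead] by (simp add: n_def)
  finally show ?thesis
    using card_mono[OF _ dead] i by (simp add: n_def)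
qed

lemma non_expandableI:
  assumes "rectangular M"
    and "\<And>i a. i < ncols M \<Longrightarrow> value_count M i a \<le> Suc (card (dead_cols M i a))"
  shows "non_expandable q M"
  unfolding non_expandable_def
proof (intro allI impI)
  fix i a assume i: "i < ncols M"
  show "ncols (bang q M i a) \<le> ncols M"
    using ncols_bang_plus_dead_cols[OF assms(1) i, of q a] assms(2)[OF i, of a] i by linarith
qed

section \<open>Permuting rows and columns\<close>

definition permute_cols :: "(nat \<Rightarrow> nat) \<Rightarrow> nat \<Rightarrow> nat option list \<Rightarrow> nat option list" where
  "permute_cols \<sigma> n r = map (\<lambda>j. r ! \<sigma> j) [0..<n]"

context
  fixes M F :: smatrix and \<sigma> :: "nat \<Rightarrow> nat"
  assumes M: "rectangular M" "M \<noteq> []"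
    and \<sigma>: "\<sigma> permutes {..<ncols M}"
    and F: "mset F = mset (map (permute_cols \<sigma> (ncols M)) M)"
begin

lemma set_permuted: "set F = permute_cols \<sigma> (ncols M) ` set M"
  using mset_eq_setD[OF F] by simp

lemma rectangular_permuted: "rectangular F" and ncols_permuted: "ncols F = ncols M"
proof -
  have "F \<noteq> []"
    using M(2) arg_cong[OF F, of size] by auto
  moreover have "\<forall>r\<in>set F. length r = ncols M"
    by (auto simp: set_permuted permute_cols_def)
  ultimately show "ncols F = ncols M" "rectangular F"
    by (auto simp: rectangular_def ncols_def neq_Nil_conv)
qed

lemma value_count_permuted:
  assumes "i < ncols M"
  shows "value_count F i a = value_count M (\<sigma> i) a"
proof -
  have "value_count F i a = size (mset [r \<leftarrow> F. r ! i = Some a])"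
    unfolding value_count_def by (rule size_mset[symmetric])
  also have "\<dots> = size (mset [r \<leftarrow> map (permute_cols \<sigma> (ncols M)) M. r ! i = Some a])"
    by (simp only: mset_filter F)
  also have "\<dots> = length [r \<leftarrow> map (permute_cols \<sigma> (ncols M)) M. r ! i = Some a]"
    by (rule size_mset)
  also have "\<dots> = value_count M (\<sigma> i) a"
    using assms by (simp add: value_count_def filter_map comp_def permute_cols_def)
  finally show ?thesis .
qed

lemma star_col_surviving_rows_permuted:
  assumes "i < ncols M" "j < ncols M"
  shows "star_col (surviving_rows F i a) j \<longleftrightarrow> star_col (surviving_rows M (\<sigma> i) a) (\<sigma> j)"
  using assms by (auto simp: star_col_def surviving_rows_def set_permuted permute_cols_def)

lemma card_dead_cols_permuted:
  assumes "i < ncols M"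
  shows "card (dead_cols F i a) = card (dead_cols M (\<sigma> i) a)"
proof -
  have mem: "j \<in> dead_cols F i a \<longleftrightarrow> \<sigma> j \<in> dead_cols M (\<sigma> i) a" if "j < ncols M" for j
    using that assms permutes_in_image[OF \<sigma>, of j]
    by (simp add: dead_cols_def ncols_permuted star_col_surviving_rows_permuted
        inj_eq[OF permutes_inj[OF \<sigma>]])
  have "\<sigma> ` dead_cols F i a = dead_cols M (\<sigma> i) a"
  proof
    show "\<sigma> ` dead_cols F i a \<subseteq> dead_cols M (\<sigma> i) a"
      using mem by (auto simp: dead_cols_def ncols_permuted)
    show "dead_cols M (\<sigma> i) a \<subseteq> \<sigma> ` dead_cols F i a"
    proof
      fix x assume x: "x \<in> dead_cols M (\<sigma> i) a"
      then have "x = \<sigma> (inv \<sigma> x)" "inv \<sigma> x < ncols M"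
        using permutes_inverses(1)[OF \<sigma>] permutes_in_image[OF permutes_inv[OF \<sigma>]]
        by (auto simp: dead_cols_def)
      with mem x show "x \<in> \<sigma> ` dead_cols F i a"
        by (metis image_eqI)
    qed
  qed
  moreover have "inj_on \<sigma> (dead_cols F i a)"
    using permutes_inj[OF \<sigma>] by (rule inj_on_subset) simp
  ultimately show ?thesis
    by (metis card_image)
qed

end

section \<open>Fractal matrices\<close>

lemma nth_concat_equal_length:
  assumes "\<forall>x\<in>set xs. length (f x) = w" "b < length xs" "t < w"
  shows "concat (map f xs) ! (b * w + t) = f (xs ! b) ! t"
  using assms
proof (induction xs arbitrary: b)
  case (Cons x xs)
  then show ?case by (cases b) (auto simp: nth_append)
qed simp

definition fractal_row :: "nat \<Rightarrow> nat \<Rightarrow> nat \<Rightarrow> nat option list \<Rightarrow> nat option list" where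
  "fractal_row q w a r = Some a # concat (map (\<lambda>b. if b = a then r else replicate w None) [0..<q])"

lemma fractal_Suc:
  "fractal q (Suc m) =
     concat (map (\<lambda>a. map (fractal_row q (ncols (fractal q m)) a) (fractal q m)) [0..<q])"
  by (simp add: fractal_row_def[abs_def] Let_def)

declare fractal.simps(2) [simp del]

lemma length_fractal_row:
  assumes "length r = w"
  shows "length (fractal_row q w a r) = Suc (q * w)"
proof -
  have "(\<lambda>b. length (if b = a then r else replicate w None)) = (\<lambda>_. w)"
    using assms by auto
  then show ?thesis
    by (simp add: fractal_row_def length_concat comp_def sum_list_triv)
qed

lemma nth_fractal_row_0 [simp]: "fractal_row q w a r ! 0 = Some a"
  by (simp add: fractal_row_def)

(* Column Suc (b * w + t) is column t of the b-th stripe. *)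
lemma nth_fractal_row_stripe:
  assumes "length r = w" "b < q" "t < w"
  shows "fractal_row q w a r ! Suc (b * w + t) = (if b = a then r ! t else None)"
proof -
  have "fractal_row q w a r ! Suc (b * w + t) =
      (if [0..<q] ! b = a then r else replicate w None) ! t"
    unfolding fractal_row_def using assms
    by (simp only: nth_Cons_Suc, subst nth_concat_equal_length) auto
  then show ?thesis using assms by simp
qed

lemma fractal_nonempty_rectangular:
  assumes "0 < q"
  shows "fractal q m \<noteq> [] \<and> rectangular (fractal q m)"
proof (induction m)
  case 0
  then show ?case by (simp add: rectangular_def ncols_def)
next
  case (Suc m)
  let ?w = "ncols (fractal q m)"
  have rows: "\<forall>r\<in>set (fractal q (Suc m)). length r = Suc (q * ?w)"
    using Suc by (auto simp: fractal_Suc rectangular_def length_fractal_row)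
  have "fractal q (Suc m) \<noteq> []"
    using Suc assms by (auto simp: fractal_Suc)
  with rows show ?case
    by (auto simp: rectangular_def ncols_def neq_Nil_conv)
qed

lemma ncols_fractal_Suc:
  assumes "0 < q"
  shows "ncols (fractal q (Suc m)) = Suc (q * ncols (fractal q m))"
proof -
  obtain r where r: "r \<in> set (fractal q m)"
    using fractal_nonempty_rectangular[OF assms] by (meson list.set_sel(1))
  then have "fractal_row q (ncols (fractal q m)) 0 r \<in> set (fractal q (Suc m))"
    using assms by (force simp: fractal_Suc)
  moreover have "length r = ncols (fractal q m)"
    using r fractal_nonempty_rectangular[OF assms] by (simp add: ncols_eq_length)
  ultimately show ?thesis
    using fractal_nonempty_rectangular[OF assms, of "Suc m"] by (simp add: ncols_eq_length length_fractal_row)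
qed

lemma length_fractal_Suc: "length (fractal q (Suc m)) = q * length (fractal q m)"
  by (simp add: fractal_Suc length_concat comp_def sum_list_triv)

lemma length_fractal:
  assumes "0 < q"
  shows "length (fractal q m) = (q - 1) * ncols (fractal q m) + 1"
proof (induction m)
  case 0
  then show ?case by (simp add: ncols_def)
next
  case (Suc m)
  obtain p where "q = Suc p"
    using assms by (cases q) auto
  with Suc show ?case
    using assms by (simp add: length_fractal_Suc ncols_fractal_Suc algebra_simps)
qed

lemma set_fractal_Suc:
  "set (fractal q (Suc m)) = (\<Union>a<q. fractal_row q (ncols (fractal q m)) a ` set (fractal q m))"
  by (auto simp: fractal_Suc)

lemma value_count_fractal_Suc:
  "value_count (fractal q (Suc m)) i a =
     (\<Sum>b<q. length [r \<leftarrow> fractal q m. fractal_row q (ncols (fractal q m)) b r ! i = Some a])"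
  by (simp add: value_count_def fractal_Suc length_concat filter_concat filter_map comp_def
      interv_sum_list_conv_sum_set_nat lessThan_atLeast0)

lemma stripe_col_less:
  fixes b t w :: nat
  assumes "b < q" "t < w"
  shows "Suc (b * w + t) < Suc (q * w)"
proof -
  have "b * w + t < Suc b * w" using assms by simp
  also have "\<dots> \<le> q * w" using assms by (intro mult_right_mono) auto
  finally show ?thesis by simp
qed

lemma value_count_fractal_Suc_0:
  "value_count (fractal q (Suc m)) 0 a \<le> length (fractal q m)"
proof -
  have "length [r \<leftarrow> fractal q m. fractal_row q w b r ! 0 = Some a] =
      (if b = a then length (fractal q m) else 0)" for w b
    by (simp add: filter_empty_conv)
  then show ?thesis
    by (simp add: value_count_fractal_Suc)
qed

lemma stripes_subset_dead_cols_0: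
  fixes q m :: nat
  assumes "0 < q"
  defines "w \<equiv> ncols (fractal q m)"
  shows "(\<lambda>(b, t). Suc (b * w + t)) ` (({..<q} - {a}) \<times> {..<w}) \<subseteq> dead_cols (fractal q (Suc m)) 0 a"
proof -
  have len: "length r = w" if "r \<in> set (fractal q m)" for r
    using that fractal_nonempty_rectangular[OF assms(1)] by (simp add: w_def ncols_eq_length)
  have "Suc (b * w + t) \<in> dead_cols (fractal q (Suc m)) 0 a" if "b < q" "b \<noteq> a" "t < w" for b t
    using that stripe_col_less[OF that(1,3)]
    by (auto simp: dead_cols_def surviving_rows_def star_col_def ncols_fractal_Suc[OF assms(1)] set_fractal_Suc
        nth_fractal_row_stripe len simp flip: w_def)
  then show ?thesis by auto
qed

lemma value_count_fractal_Suc_stripe: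
  fixes q m :: nat
  assumes "0 < q"
  defines "w \<equiv> ncols (fractal q m)"
  assumes "b < q" "t < w"
  shows "value_count (fractal q (Suc m)) (Suc (b * w + t)) a = value_count (fractal q m) t a"
proof -
  have len: "length r = w" if "r \<in> set (fractal q m)" for r
    using that fractal_nonempty_rectangular[OF assms(1)] by (simp add: w_def ncols_eq_length)
  have "length [r \<leftarrow> fractal q m. fractal_row q w b' r ! Suc (b * w + t) = Some a] =
      (if b' = b then value_count (fractal q m) t a else 0)" for b'
    using assms(3,4) by (auto simp: value_count_def nth_fractal_row_stripe len filter_empty_conv
        intro!: arg_cong[where f = length] filter_cong)
  then show ?thesis
    using assms(3) by (simp add: value_count_fractal_Suc flip: w_def)
qed

lemma stripe_subset_dead_cols:
  fixes q m :: nat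
  assumes "0 < q"
  defines "w \<equiv> ncols (fractal q m)"
  assumes "b < q" "t < w"
  shows "(\<lambda>t'. Suc (b * w + t')) ` dead_cols (fractal q m) t a
    \<subseteq> dead_cols (fractal q (Suc m)) (Suc (b * w + t)) a"
proof -
  have len: "length r = w" if "r \<in> set (fractal q m)" for r
    using that fractal_nonempty_rectangular[OF assms(1)] by (simp add: w_def ncols_eq_length)
  have "Suc (b * w + t') \<in> dead_cols (fractal q (Suc m)) (Suc (b * w + t)) a"
    if "t' \<in> dead_cols (fractal q m) t a" for t'
    using that assms(3,4) stripe_col_less[OF assms(3), of t' w]
    by (auto simp: dead_cols_def surviving_rows_def star_col_def ncols_fractal_Suc[OF assms(1)] set_fractal_Suc
        nth_fractal_row_stripe len simp flip: w_def)
  then show ?thesis by auto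
qed

lemma inj_on_stripe_col: "inj_on (\<lambda>(b, t). Suc (b * w + t)) (B \<times> {..<w})"
proof (rule inj_onI, clarsimp)
  fix b t b' t' :: nat
  assume t: "t < w" "t' < w" and eq: "b * w + t = b' * w + t'"
  have "(b * w + t) div w = b" "(b * w + t) mod w = t"
    using t(1) by simp_all
  moreover have "(b' * w + t') div w = b'" "(b' * w + t') mod w = t'"
    using t(2) by simp_all
  ultimately show "b = b' \<and> t = t'"
    using eq by metis
qed

lemma value_count_fractal_le:
  assumes "0 < q"
  shows "i < ncols (fractal q m) \<Longrightarrow>
    value_count (fractal q m) i a \<le> Suc (card (dead_cols (fractal q m) i a))"
proof (induction m arbitrary: i)
  case 0
  then show ?case by (simp add: ncols_def)
next
  case (Suc m)
  define w where "w = ncols (fractal q m)"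
  have fin: "finite (dead_cols (fractal q (Suc m)) i a)"
    by (simp add: dead_cols_def)
  show ?case
  proof (cases i)
    case 0
    define S where "S = ({..<q} - {a}) \<times> {..<w}"
    have "value_count (fractal q (Suc m)) i a \<le> (q - 1) * w + 1"
      using 0 value_count_fractal_Suc_0[of q m a] length_fractal[OF assms, of m] by (simp add: w_def)
    also have "(q - 1) * w \<le> card S"
      by (simp add: S_def card_cartesian_product card_Diff_singleton_if)
    also have "\<dots> = card ((\<lambda>(b, t). Suc (b * w + t)) ` S)"
      by (simp add: S_def card_image inj_on_stripe_col)
    also have "\<dots> \<le> card (dead_cols (fractal q (Suc m)) i a)"
      using 0 stripes_subset_dead_cols_0[OF assms] by (intro card_mono[OF fin]) (simp add: S_def w_def)
    finally show ?thesis by simp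
  next
    case (Suc j)
    then have "j < q * w"
      using Suc.prems by (simp add: ncols_fractal_Suc[OF assms] w_def)
    then have w: "0 < w" "j div w < q"
      by (auto simp: less_mult_imp_div_less intro: Nat.gr0I)
    define b t where "b = j div w" and "t = j mod w"
    have bt: "b < q" "t < w" "i = Suc (b * w + t)"
      using w Suc by (simp_all add: b_def t_def)
    have "value_count (fractal q (Suc m)) i a = value_count (fractal q m) t a"
      using value_count_fractal_Suc_stripe[OF assms bt(1)] bt by (simp add: w_def)
    also have "\<dots> \<le> Suc (card (dead_cols (fractal q m) t a))"
      using Suc.IH bt(2) by (simp add: w_def)
    also have "card (dead_cols (fractal q m) t a) =
        card ((\<lambda>t'. Suc (b * w + t')) ` dead_cols (fractal q m) t a)"
      by (rule card_image[symmetric]) (simp add: inj_on_def)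
    also have "\<dots> \<le> card (dead_cols (fractal q (Suc m)) i a)"
      using stripe_subset_dead_cols[OF assms bt(1)] bt by (intro card_mono[OF fin]) (simp add: w_def)
    finally show ?thesis by simp
  qed
qed

theorem mainTheorem13:
  fixes q m :: nat and F :: smatrix
  assumes "q \<ge> 2" and "m \<ge> 1" and "is_fractal q m F"
  shows "non_expandable q F"
proof -
  have q: "0 < q"
    using assms(1) by simp
  define M where "M = fractal q m"
  obtain \<sigma> where \<sigma>: "\<sigma> permutes {..<ncols M}"
    and F: "mset F = mset (map (permute_cols \<sigma> (ncols M)) M)"
    using assms(3) unfolding is_fractal_def Let_def permute_cols_def[abs_def] M_def by blast
  have M: "rectangular M" "M \<noteq> []"
    using fractal_nonempty_rectangular[OF q] by (simp_all add: M_def)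
  show ?thesis
  proof (rule non_expandableI)
    show "rectangular F"
      by (rule rectangular_permuted[OF M \<sigma> F])
  next
    fix i a assume "i < ncols F"
    then have i: "i < ncols M" "\<sigma> i < ncols M"
      using ncols_permuted[OF M \<sigma> F] permutes_in_image[OF \<sigma>] by simp_all
    have "value_count M (\<sigma> i) a \<le> Suc (card (dead_cols M (\<sigma> i) a))"
      using value_count_fractal_le[OF q] i(2) by (simp add: M_def)
    then show "value_count F i a \<le> Suc (card (dead_cols F i a))"
      using value_count_permuted[OF M \<sigma> F i(1)] card_dead_cols_permuted[OF M \<sigma> F i(1)] by simp
  qed
qed

end
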